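(* Assume the CFL condition $0\le\lambda\sup_{w\ge1}W'(w)\le1$. Let $(y^0_i)_{i\in\mathbb Z}$ be a bounded sequence with $y^0_i\ge1$, and define recursively for $n\ge0$ $$w^n_i=\sum_{j\ge i}\Phi_{ij\alpha}y^n_j,\qquad y^{n+1}_i=y^n_i+\lambda\bigl(W(w^n_{i+1})-W(w^n_i)\bigr),\quad i\in\mathbb Z.$$ Then for every $\alpha>0$, every $i\in\mathbb Z$ and every $n\ge0$, $$\inf_{j\in\mathbb Z}y^0_j\le y^n_i\le\sup_{j\in\mathbb Z}y^0_j.$$
   Context: Kernel: $\Phi:[0,\infty)\to[0,\infty)$ is non-increasing with $\int_0^\infty\Phi(z)\,dz=1$ and $\int_0^\infty z\Phi(z)\,dz<\infty$; for $\alpha>0$, $\Phi_\alpha(z)=\alpha^{-1}\Phi(z/\alpha)$. Flux: $V\in C^1([0,\infty))$ is non-increasing and $W:[1,\infty)\to\mathbb R$, $W(w)=V(1/w)$. Discretization: $\Delta z>0$, $\Delta t>0$, $\lambda=\Delta t/\Delta z$, $z_j=(j-\tfrac12)\Delta z$ for $j\in\tfrac12\mathbb Z$, and for integers $j\ge i$, $\Phi_{ij\alpha}=\int_{z_{j-1/2}}^{z_{j+1/2}}\Phi_\alpha(\zeta-z_{i-1/2})\,d\zeta$. *)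

theory Defs
  imports "HOL-Analysis.Analysis"
begin

definition Phi_scaled :: "(real \<Rightarrow> real) \<Rightarrow> real \<Rightarrow> real \<Rightarrow> real" where
  "Phi_scaled Phi \<alpha> z = Phi (z / \<alpha>) / \<alpha>"

definition zgrid :: "real \<Rightarrow> real \<Rightarrow> real" where
  "zgrid dz j = (j - 1/2) * dz"

definition Phi_ij :: "(real \<Rightarrow> real) \<Rightarrow> real \<Rightarrow> real \<Rightarrow> int \<Rightarrow> int \<Rightarrow> real" where
  "Phi_ij Phi \<alpha> dz i j =
     integral {zgrid dz (real_of_int j - 1/2) .. zgrid dz (real_of_int j + 1/2)}
       (\<lambda>\<zeta>. Phi_scaled Phi \<alpha> (\<zeta> - zgrid dz (real_of_int i - 1/2)))"

text \<open>W(w) = V(1/w) (meaningful for w >= 1).\<close>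
definition Wflux :: "(real \<Rightarrow> real) \<Rightarrow> real \<Rightarrow> real" where
  "Wflux V w = V (1 / w)"

end

theory Submission
  imports Defs
begin

(* The weights Phi_{i,i+k,alpha} are the masses c_k of Phi on the cells [k h, (k+1) h], h = dz/alpha:
   they are nonnegative, non-increasing in k (because Phi is) and sum to 1. So w_i = sum_k c_k y_{i+k}
   is an average of the y_j, and summation by parts,
     w_{i+1} - w_i = - c_0 y_i + sum_k (c_k - c_{k+1}) y_{i+1+k},
   gives c_0 (m - y_i) <= w_{i+1} - w_i <= c_0 (M - y_i) whenever m <= y <= M. On [1, oo) the flux W is
   non-decreasing with Lipschitz constant L = sup W', so under the CFL condition lam L <= 1 the update
   lam (W(w_{i+1}) - W(w_i)) has the sign of w_{i+1} - w_i and is at most the distance from y_i to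
   M (resp. m). The bounds therefore propagate by induction on n. *)

lemma has_real_derivative_Wflux:
  assumes V_deriv: "\<And>x. 0 \<le> x \<Longrightarrow> (V has_real_derivative V' x) (at x within {0..})"
    and u: "1 \<le> u"
  shows "(Wflux V has_real_derivative - V' (1/u) / u^2) (at u)"
proof -
  have "(V has_real_derivative V' (1/u)) (at (1/u))"
    using V_deriv[of "1/u"] u at_within_interior[of "1/u" "{0..}"] by simp
  moreover have "((\<lambda>x. 1/x) has_real_derivative - 1 / u^2) (at u)"
    using u by (auto intro!: derivative_eq_intros simp: power2_eq_square)
  ultimately have "((\<lambda>x. V (1/x)) has_real_derivative V' (1/u) * (- 1 / u^2)) (at u)"
    using DERIV_chain2 by blast
  then show ?thesis unfolding Wflux_def[abs_def] by simp
qed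

lemma Wflux_mono:
  assumes V_mono: "\<And>x z. 0 \<le> x \<Longrightarrow> x \<le> z \<Longrightarrow> V z \<le> V x"
    and "1 \<le> a" "a \<le> b"
  shows "Wflux V a \<le> Wflux V b"
  using V_mono[of "1/b" "1/a"] assms(2,3) by (simp add: Wflux_def frac_le)

lemma bdd_above_deriv_Wflux:
  assumes V_deriv: "\<And>x. 0 \<le> x \<Longrightarrow> (V has_real_derivative V' x) (at x within {0..})"
    and V'_cont: "continuous_on {0..} V'"
  shows "bdd_above (deriv (Wflux V) ` {1..})"
proof -
  have "compact (V' ` {0..1})"
    by (rule compact_continuous_image) (auto intro: continuous_on_subset[OF V'_cont])
  then obtain B where B: "\<And>x. x \<in> {0..1} \<Longrightarrow> \<bar>V' x\<bar> \<le> B"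
    unfolding bounded_real[symmetric] by (metis bounded_real compact_imp_bounded image_eqI)
  show ?thesis
  proof (rule bdd_aboveI2)
    fix u :: real assume "u \<in> {1..}"
    then have u: "1 \<le> u" by simp
    have "deriv (Wflux V) u = - V' (1/u) / u^2"
      using has_real_derivative_Wflux[OF V_deriv u] by (rule DERIV_imp_deriv)
    also have "\<dots> \<le> \<bar>V' (1/u)\<bar> / u^2"
      by (rule divide_right_mono) auto
    also have "\<dots> \<le> \<bar>V' (1/u)\<bar> / 1"
      using u by (intro divide_left_mono) (auto simp: one_le_power)
    also have "\<dots> \<le> B" using B u by simp
    finally show "deriv (Wflux V) u \<le> B" .
  qed
qed

lemma diff_le_SUP_deriv_mult:
  fixes f :: "real \<Rightarrow> real"
  assumes "a \<le> b" "{a..b} \<subseteq> S"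
    and f_deriv: "\<And>x. x \<in> S \<Longrightarrow> f differentiable at x"
    and bdd: "bdd_above (deriv f ` S)"
  shows "f b - f a \<le> (SUP u\<in>S. deriv f u) * (b - a)"
proof (cases "a = b")
  case False
  with assms(1) have "a < b" by simp
  have "DERIV f x :> deriv f x" if "a \<le> x" "x \<le> b" for x
    using f_deriv assms(2) that by (auto simp: DERIV_deriv_iff_real_differentiable)
  then obtain z where z: "a < z" "z < b" "f b - f a = (b - a) * deriv f z"
    using MVT2[OF \<open>a < b\<close>] by blast
  have "deriv f z \<le> (SUP u\<in>S. deriv f u)"
    using z assms(2) by (intro cSUP_upper[OF _ bdd]) auto
  then show ?thesis
    using z(3) \<open>a < b\<close> by (simp add: mult.commute mult_left_mono)
qed simp

lemma Wflux_diff_le: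
  assumes V_deriv: "\<And>x. 0 \<le> x \<Longrightarrow> (V has_real_derivative V' x) (at x within {0..})"
    and V'_cont: "continuous_on {0..} V'"
    and "1 \<le> a" "a \<le> b"
  shows "Wflux V b - Wflux V a \<le> (SUP u\<in>{1..}. deriv (Wflux V) u) * (b - a)"
proof (rule diff_le_SUP_deriv_mult)
  show "Wflux V differentiable at x" if "x \<in> {1..}" for x
    using has_real_derivative_Wflux[OF V_deriv] that real_differentiable_def by auto
qed (use assms bdd_above_deriv_Wflux[OF V_deriv V'_cont] in auto)

definition cell_integral :: "(real \<Rightarrow> real) \<Rightarrow> real \<Rightarrow> nat \<Rightarrow> real" where
  "cell_integral f h k = integral {real k * h .. real (Suc k) * h} f"

lemma has_integral_cell_integral:
  assumes "f integrable_on {0..}" "0 \<le> h"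
  shows "(f has_integral cell_integral f h k) {real k * h .. real (Suc k) * h}"
  unfolding cell_integral_def
  by (rule integrable_integral, rule integrable_on_subinterval[OF assms(1)]) (use assms(2) in auto)

lemma cell_integral_nonneg:
  assumes "\<And>x. 0 \<le> x \<Longrightarrow> 0 \<le> f x" "f integrable_on {0..}" "0 \<le> h"
  shows "0 \<le> cell_integral f h k"
proof (rule has_integral_nonneg[OF has_integral_cell_integral[OF assms(2,3)]])
  fix x assume "x \<in> {real k * h .. real (Suc k) * h}"
  with assms(3) show "0 \<le> f x" by (intro assms(1)) (auto intro: order_trans[rotated])
qed

lemma cell_integral_Suc_le:
  assumes f_antimono: "\<And>x z. 0 \<le> x \<Longrightarrow> x \<le> z \<Longrightarrow> f z \<le> f x"
    and "f integrable_on {0..}" "0 \<le> h"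
  shows "cell_integral f h (Suc k) \<le> cell_integral f h k"
proof -
  have "((\<lambda>x. f (x + h)) has_integral cell_integral f h (Suc k))
          {real (Suc k) * h - h .. real (Suc (Suc k)) * h - h}"
    using has_integral_cell_integral[OF assms(2,3)] by (rule has_integral_shift_real_ivl)
  then have "((\<lambda>x. f (x + h)) has_integral cell_integral f h (Suc k)) {real k * h .. real (Suc k) * h}"
    by (simp add: algebra_simps)
  then show ?thesis
    using has_integral_cell_integral[OF assms(2,3)]
  proof (rule has_integral_le)
    fix x assume "x \<in> {real k * h .. real (Suc k) * h}"
    with assms(3) have "0 \<le> x" by (auto intro: order_trans[rotated])
    with assms(3) show "f (x + h) \<le> f x" by (intro f_antimono) auto
  qed
qed

lemma sum_cell_integral:
  assumes "f integrable_on {0..}" "0 \<le> h"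
  shows "(\<Sum>k<n. cell_integral f h k) = integral {0 .. real n * h} f"
proof (induction n)
  case (Suc n)
  have "integral {0 .. real n * h} f + integral {real n * h .. real (Suc n) * h} f
          = integral {0 .. real (Suc n) * h} f"
  proof (rule Henstock_Kurzweil_Integration.integral_combine)
    show "real n * h \<le> real (Suc n) * h" using assms(2) by (simp add: mult_right_mono)
    show "f integrable_on {0..real (Suc n) * h}"
      by (rule integrable_on_subinterval[OF assms(1)]) auto
  qed (use assms(2) in simp)
  with Suc.IH show ?case by (simp only: sum.lessThan_Suc cell_integral_def)
qed simp

lemma integral_Icc_tendsto_integral_atLeast:
  fixes f :: "real \<Rightarrow> real"
  assumes f_nonneg: "\<And>x. 0 \<le> x \<Longrightarrow> 0 \<le> f x" and f_int: "(f has_integral I) {0..}" and h: "0 < h"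
  shows "(\<lambda>n. integral {0 .. real n * h} f) \<longlonglongrightarrow> I"
proof -
  define g where "g n x = (if x \<in> {0 .. real n * h} then f x else 0)" for n x
  have f_intg: "f integrable_on {0..}" using f_int by (rule has_integral_integrable)
  have g_integral: "integral {0..} (g n) = integral {0 .. real n * h} f" for n
    unfolding g_def integral_restrict_Int by (simp add: Int_absorb2)
  have "f integrable_on {0..} \<and> (\<lambda>n. integral {0..} (g n)) \<longlonglongrightarrow> integral {0..} f"
  proof (rule monotone_convergence_increasing)
    show "g n integrable_on {0..}" for n
      unfolding g_def integrable_restrict_Int
      by (simp add: Int_absorb2 integrable_on_subinterval[OF f_intg])
    show "g n x \<le> g (Suc n) x" if "x \<in> {0..}" for n x
    proof -
      have "real n * h \<le> real (Suc n) * h" using h by (intro mult_right_mono) auto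
      then show ?thesis using that f_nonneg[of x] by (auto simp: g_def simp del: of_nat_Suc)
    qed
    show "(\<lambda>n. g n x) \<longlonglongrightarrow> f x" if "x \<in> {0..}" for x
    proof (rule tendsto_eventually)
      obtain N where N: "x < real N * h" using ex_less_of_nat_mult[OF h] by blast
      show "\<forall>\<^sub>F n in sequentially. g n x = f x"
      proof (rule eventually_sequentiallyI)
        fix n assume "N \<le> n"
        then have "real N * h \<le> real n * h" using h by (intro mult_right_mono) auto
        then show "g n x = f x" using N that by (auto simp: g_def)
      qed
    qed
    have "integral {0 .. real n * h} f \<in> {0..I}" for n
    proof -
      have f_intg_n: "f integrable_on {0 .. real n * h}"
        by (rule integrable_on_subinterval[OF f_intg]) auto
      have "0 \<le> integral {0 .. real n * h} f"
        using f_nonneg by (intro integral_nonneg[OF f_intg_n]) auto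
      moreover have "integral {0 .. real n * h} f \<le> integral {0..} f"
        using f_nonneg by (intro integral_subset_le[OF _ f_intg_n f_intg]) auto
      ultimately show ?thesis using integral_unique[OF f_int] by simp
    qed
    then show "bounded (range (\<lambda>n. integral {0..} (g n)))"
      by (intro bounded_subset[OF bounded_closed_interval[of 0 I]]) (auto simp: g_integral)
  qed
  then show ?thesis using integral_unique[OF f_int] by (simp add: g_integral)
qed

lemma sums_cell_integral:
  fixes f :: "real \<Rightarrow> real"
  assumes "\<And>x. 0 \<le> x \<Longrightarrow> 0 \<le> f x" "(f has_integral I) {0..}" "0 < h"
  shows "cell_integral f h sums I"
  unfolding sums_def
  using integral_Icc_tendsto_integral_atLeast[OF assms]
    sum_cell_integral[OF has_integral_integrable[OF assms(2)]] assms(3) by simp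

lemma has_integral_rescale_shift:
  fixes f :: "real \<Rightarrow> real"
  assumes "(f has_integral I) {A..B}" "\<alpha> > 0"
  shows "((\<lambda>\<zeta>. f ((\<zeta> - s) / \<alpha>) / \<alpha>) has_integral I) {\<alpha> * A + s .. \<alpha> * B + s}"
proof -
  have "((\<lambda>x. f ((1/\<alpha>) *\<^sub>R x + - s/\<alpha>)) has_integral I /\<^sub>R (1/\<alpha>) ^ DIM(real))
           (cbox ((A - - s/\<alpha>) /\<^sub>R (1/\<alpha>)) ((B - - s/\<alpha>) /\<^sub>R (1/\<alpha>)))"
    using assms by (intro has_integral_affinity') auto
  moreover have "(\<lambda>x. f ((1/\<alpha>) *\<^sub>R x + - s/\<alpha>)) = (\<lambda>x. f ((x - s) / \<alpha>))"
    by (simp add: diff_divide_distrib)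
  moreover have "I /\<^sub>R (1/\<alpha>) ^ DIM(real) = I * \<alpha>" by simp
  moreover have "cbox ((A - - s/\<alpha>) /\<^sub>R (1/\<alpha>)) ((B - - s/\<alpha>) /\<^sub>R (1/\<alpha>)) = {\<alpha> * A + s .. \<alpha> * B + s}"
    using assms(2) by (simp add: cbox_interval field_simps)
  ultimately have "((\<lambda>x. f ((x - s) / \<alpha>)) has_integral I * \<alpha>) {\<alpha> * A + s .. \<alpha> * B + s}"
    by (simp only:)
  from has_integral_mult_left[OF this, of "1/\<alpha>"] show ?thesis
    using assms(2) by simp
qed

lemma Phi_ij_eq_cell_integral:
  assumes "Phi integrable_on {0..}" "\<alpha> > 0" "dz \<ge> 0"
  shows "Phi_ij Phi \<alpha> dz i (i + int k) = cell_integral Phi (dz / \<alpha>) k"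
proof -
  have "((\<lambda>\<zeta>. Phi ((\<zeta> - (real_of_int i - 1) * dz) / \<alpha>) / \<alpha>) has_integral cell_integral Phi (dz / \<alpha>) k)
     {\<alpha> * (real k * (dz / \<alpha>)) + (real_of_int i - 1) * dz ..
      \<alpha> * (real (Suc k) * (dz / \<alpha>)) + (real_of_int i - 1) * dz}"
    using assms by (intro has_integral_rescale_shift has_integral_cell_integral) auto
  moreover have "\<alpha> * (real k * (dz / \<alpha>)) + (real_of_int i - 1) * dz
                   = zgrid dz (real_of_int (i + int k) - 1/2)"
    "\<alpha> * (real (Suc k) * (dz / \<alpha>)) + (real_of_int i - 1) * dz
                   = zgrid dz (real_of_int (i + int k) + 1/2)"
    using assms(2) by (simp_all add: zgrid_def field_simps)
  moreover have "(\<lambda>\<zeta>. Phi ((\<zeta> - (real_of_int i - 1) * dz) / \<alpha>) / \<alpha>)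
                   = (\<lambda>\<zeta>. Phi_scaled Phi \<alpha> (\<zeta> - zgrid dz (real_of_int i - 1/2)))"
    by (simp add: Phi_scaled_def zgrid_def)
  ultimately show ?thesis
    unfolding Phi_ij_def by (simp add: integral_unique)
qed

lemma summable_mult_bounded:
  fixes c u :: "nat \<Rightarrow> real"
  assumes "\<And>k. 0 \<le> c k" "summable c" "\<And>k. 0 \<le> u k" "\<And>k. u k \<le> M"
  shows "summable (\<lambda>k. c k * u k)"
proof (rule summable_comparison_test'[OF summable_mult2[OF assms(2), of M]])
  show "norm (c k * u k) \<le> c k * M" for k
    using mult_left_mono[OF assms(4) assms(1)] assms(1,3) by simp
qed

lemma sums_atLeast_int_infsum:
  fixes g :: "int \<Rightarrow> real"
  assumes g_nonneg: "\<And>j. i \<le> j \<Longrightarrow> 0 \<le> g j" and g_summable: "summable (\<lambda>k. g (i + int k))"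
  shows "(\<lambda>k. g (i + int k)) sums (\<Sum>\<^sub>\<infinity>j\<in>{i..}. g j)"
proof -
  have "((\<lambda>k. g (i + int k)) has_sum (\<Sum>k. g (i + int k))) UNIV"
    by (rule sums_nonneg_imp_has_sum[OF summable_sums[OF g_summable]]) (rule g_nonneg, simp)
  moreover have "bij_betw (\<lambda>k. i + int k) UNIV {i..}"
    by (rule bij_betwI[of _ _ _ "\<lambda>j. nat (j - i)"]) auto
  ultimately have "(g has_sum (\<Sum>k. g (i + int k))) {i..}"
    using has_sum_reindex_bij_betw by blast
  then show ?thesis
    using summable_sums[OF g_summable] by (simp only: infsumI)
qed

lemma kernel_sum_ge:
  fixes c :: "nat \<Rightarrow> real" and u :: "int \<Rightarrow> real"
  assumes "\<And>k. 0 \<le> c k" "c sums 1" "\<And>j. m \<le> u j"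
    and "(\<lambda>k. c k * u (i + int k)) sums s"
  shows "m \<le> s"
proof -
  have "c k * m \<le> c k * u (i + int k)" for k
    using assms(1,3) by (rule mult_left_mono[rotated])
  with sums_le[OF _ sums_mult2[OF assms(2), of m] assms(4)] show ?thesis by simp
qed

lemma kernel_sum_increment_bounds:
  fixes c :: "nat \<Rightarrow> real" and u w :: "int \<Rightarrow> real"
  assumes c_antimono: "\<And>k. c (Suc k) \<le> c k" and c_summable: "summable c"
    and u_bounds: "\<And>j. m \<le> u j" "\<And>j. u j \<le> M"
    and w_sums: "\<And>i. (\<lambda>k. c k * u (i + int k)) sums w i"
  shows "c 0 * (m - u i) \<le> w (i + 1) - w i" "w (i + 1) - w i \<le> c 0 * (M - u i)"
proof -
  have "(\<lambda>k. c (Suc k) * u (i + int (Suc k))) sums (w i - c 0 * u i)"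
    using w_sums[of i] by (subst sums_Suc_iff) simp
  then have "(\<lambda>k. c (Suc k) * u (i + 1 + int k)) sums (w i - c 0 * u i)"
    by (simp add: add.assoc)
  from sums_diff[OF w_sums[of "i + 1"] this]
  have D: "(\<lambda>k. (c k - c (Suc k)) * u (i + 1 + int k)) sums (w (i + 1) - (w i - c 0 * u i))"
    by (simp add: left_diff_distrib)
  have telescope: "(\<lambda>k. c k - c (Suc k)) sums c 0"
    using telescope_sums'[OF summable_LIMSEQ_zero[OF c_summable]] by simp
  have c_diff_nonneg: "0 \<le> c k - c (Suc k)" for k
    using c_antimono[of k] by simp
  have "(c k - c (Suc k)) * m \<le> (c k - c (Suc k)) * u (i + 1 + int k)" for k
    using c_diff_nonneg u_bounds(1) by (rule mult_left_mono[rotated])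
  from sums_le[OF _ sums_mult2[OF telescope, of m] D] this
  show "c 0 * (m - u i) \<le> w (i + 1) - w i" by (simp add: algebra_simps)
  have "(c k - c (Suc k)) * u (i + 1 + int k) \<le> (c k - c (Suc k)) * M" for k
    using c_diff_nonneg u_bounds(2) by (rule mult_left_mono[rotated])
  from sums_le[OF _ D sums_mult2[OF telescope, of M]] this
  show "w (i + 1) - w i \<le> c 0 * (M - u i)" by (simp add: algebra_simps)
qed

lemma monotone_flux_step_bounds:
  fixes W :: "real \<Rightarrow> real"
  assumes W_mono: "\<And>a b. 1 \<le> a \<Longrightarrow> a \<le> b \<Longrightarrow> W a \<le> W b"
    and W_lip: "\<And>a b. 1 \<le> a \<Longrightarrow> a \<le> b \<Longrightarrow> W b - W a \<le> L * (b - a)"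
    and CFL: "0 \<le> lam" "0 \<le> lam * L" "lam * L \<le> 1"
    and ab: "1 \<le> a" "1 \<le> b"
    and c: "0 \<le> c" "c \<le> 1" and y: "m \<le> y" "y \<le> M"
    and increment: "c * (m - y) \<le> b - a" "b - a \<le> c * (M - y)"
  shows "m \<le> y + lam * (W b - W a)" "y + lam * (W b - W a) \<le> M"
proof -
  have contraction: "lam * (W t - W s) \<le> d"
    if "1 \<le> s" "s \<le> t" "t - s \<le> c * d" "0 \<le> d" for s t d
  proof -
    have "lam * (W t - W s) \<le> (lam * L) * (t - s)"
      using mult_left_mono[OF W_lip[OF that(1,2)] CFL(1)] by (simp add: mult.assoc)
    also have "\<dots> \<le> (lam * L) * (c * d)" using that(3) CFL(2) by (rule mult_left_mono)
    also have "\<dots> \<le> c * d" using CFL(2,3) c(1) that(4) by (intro mult_left_le_one_le) auto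
    also have "\<dots> \<le> d" using c that(4) by (intro mult_left_le_one_le) auto
    finally show ?thesis .
  qed
  consider "a \<le> b" | "b \<le> a" by linarith
  then have "m \<le> y + lam * (W b - W a) \<and> y + lam * (W b - W a) \<le> M"
  proof cases
    case 1
    have "0 \<le> lam * (W b - W a)" using W_mono[OF ab(1) 1] CFL(1) by simp
    moreover have "lam * (W b - W a) \<le> M - y"
      using contraction[OF ab(1) 1 increment(2)] y by simp
    ultimately show ?thesis using y by linarith
  next
    case 2
    have "0 \<le> lam * (W a - W b)" using W_mono[OF ab(2) 2] CFL(1) by simp
    moreover have "lam * (W a - W b) \<le> y - m"
    proof (rule contraction[OF ab(2) 2])
      show "a - b \<le> c * (y - m)" using increment(1) by (simp add: algebra_simps)
    qed (use y in simp)
    ultimately show ?thesis using y by (simp add: algebra_simps)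
  qed
  then show "m \<le> y + lam * (W b - W a)" "y + lam * (W b - W a) \<le> M" by simp_all
qed

lemma sums_Phi_ij_convolution:
  fixes Phi :: "real \<Rightarrow> real" and u :: "int \<Rightarrow> real"
  assumes Phi_nonneg: "\<And>z. 0 \<le> z \<Longrightarrow> 0 \<le> Phi z" and Phi_int: "(Phi has_integral I) {0..}"
    and "\<alpha> > 0" "dz > 0" and u_bounds: "\<And>j. 0 \<le> u j" "\<And>j. u j \<le> M"
  shows "(\<lambda>k. cell_integral Phi (dz / \<alpha>) k * u (i + int k)) sums
           (\<Sum>\<^sub>\<infinity>j\<in>{i..}. Phi_ij Phi \<alpha> dz i j * u j)"
proof -
  have Phi_intg: "Phi integrable_on {0..}" using Phi_int by (rule has_integral_integrable)
  have h: "0 < dz / \<alpha>" using assms(3,4) by simp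
  have Phi_ij_eq: "Phi_ij Phi \<alpha> dz i (i + int k) = cell_integral Phi (dz / \<alpha>) k" for k
    using Phi_ij_eq_cell_integral[OF Phi_intg] assms(3,4) by simp
  have c_nonneg: "0 \<le> cell_integral Phi (dz / \<alpha>) k" for k
    using cell_integral_nonneg[OF Phi_nonneg Phi_intg] h by simp
  have "summable (\<lambda>k. cell_integral Phi (dz / \<alpha>) k * u (i + int k))"
    using c_nonneg sums_summable[OF sums_cell_integral[OF Phi_nonneg Phi_int h]] u_bounds
    by (rule summable_mult_bounded)
  moreover have "0 \<le> Phi_ij Phi \<alpha> dz i j * u j" if "i \<le> j" for j
    using Phi_ij_eq[of "nat (j - i)"] c_nonneg u_bounds(1) that by simp
  ultimately show ?thesis
    using sums_atLeast_int_infsum[of i "\<lambda>j. Phi_ij Phi \<alpha> dz i j * u j"] by (simp add: Phi_ij_eq)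
qed

lemma kernel_upwind_step_bounds:
  fixes c :: "nat \<Rightarrow> real" and u w :: "int \<Rightarrow> real" and W :: "real \<Rightarrow> real"
  assumes c_nonneg: "\<And>k. 0 \<le> c k" and c_antimono: "\<And>k. c (Suc k) \<le> c k"
    and c_sums: "c sums 1"
    and u_bounds: "\<And>j. m \<le> u j" "\<And>j. u j \<le> M" and m: "1 \<le> m"
    and w_sums: "\<And>i. (\<lambda>k. c k * u (i + int k)) sums w i"
    and W_mono: "\<And>a b. 1 \<le> a \<Longrightarrow> a \<le> b \<Longrightarrow> W a \<le> W b"
    and W_lip: "\<And>a b. 1 \<le> a \<Longrightarrow> a \<le> b \<Longrightarrow> W b - W a \<le> L * (b - a)"
    and CFL: "0 \<le> lam" "0 \<le> lam * L" "lam * L \<le> 1"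
  shows "m \<le> u i + lam * (W (w (i + 1)) - W (w i))"
    "u i + lam * (W (w (i + 1)) - W (w i)) \<le> M"
proof -
  have "c 0 \<le> 1"
    using sum_le_suminf[OF sums_summable[OF c_sums], of "{0}"] c_nonneg sums_unique[OF c_sums]
    by simp
  moreover have "1 \<le> w j" for j
    using m kernel_sum_ge[OF c_nonneg c_sums u_bounds(1) w_sums] by (rule order_trans)
  moreover note kernel_sum_increment_bounds[OF c_antimono sums_summable[OF c_sums] u_bounds w_sums]
  ultimately show "m \<le> u i + lam * (W (w (i + 1)) - W (w i))"
    and "u i + lam * (W (w (i + 1)) - W (w i)) \<le> M"
    using c_nonneg[of 0] u_bounds[of i]
    by (auto intro!: monotone_flux_step_bounds[OF W_mono W_lip CFL, of "w i" "w (i + 1)" "c 0"])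
qed

theorem lemma3p1:
  fixes Phi V V' :: "real \<Rightarrow> real"
    and dz dt \<alpha> :: real
    and y0 :: "int \<Rightarrow> real"
    and y w :: "nat \<Rightarrow> int \<Rightarrow> real"
  assumes Phi_nonneg: "\<And>z. 0 \<le> z \<Longrightarrow> 0 \<le> Phi z"
    and Phi_mono: "\<And>x z. 0 \<le> x \<Longrightarrow> x \<le> z \<Longrightarrow> Phi z \<le> Phi x"
    and Phi_int: "(Phi has_integral 1) {0..}"
    and Phi_moment: "(\<lambda>z. z * Phi z) integrable_on {0..}"
    and V_deriv: "\<And>x. 0 \<le> x \<Longrightarrow> (V has_real_derivative V' x) (at x within {0..})"
    and V'_cont: "continuous_on {0..} V'"
    and V_mono: "\<And>x z. 0 \<le> x \<Longrightarrow> x \<le> z \<Longrightarrow> V z \<le> V x"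
    and dz_pos: "dz > 0" and dt_pos: "dt > 0"
    and CFL: "0 \<le> (dt / dz) * (SUP u\<in>{1..}. deriv (Wflux V) u)"
             "(dt / dz) * (SUP u\<in>{1..}. deriv (Wflux V) u) \<le> 1"
    and y0_bdd: "bdd_above (range y0)"
    and y0_ge1: "\<And>i. y0 i \<ge> 1"
    and alpha_pos: "\<alpha> > 0"
    and y_init: "\<And>i. y 0 i = y0 i"
    and w_def: "\<And>n i. w n i = (\<Sum>\<^sub>\<infinity>j\<in>{i..}. Phi_ij Phi \<alpha> dz i j * y n j)"
    and y_step: "\<And>n i. y (Suc n) i =
                   y n i + (dt / dz) * (Wflux V (w n (i + 1)) - Wflux V (w n i))"
  shows "\<forall>n i. (INF j. y0 j) \<le> y n i \<and> y n i \<le> (SUP j. y0 j)"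
proof -
  define c where "c = cell_integral Phi (dz / \<alpha>)"
  define m where "m = (INF j. y0 j)"
  define M where "M = (SUP j. y0 j)"
  have Phi_intg: "Phi integrable_on {0..}" using Phi_int by (rule has_integral_integrable)
  have h: "0 < dz / \<alpha>" using dz_pos alpha_pos by simp
  have c_nonneg: "\<And>k. 0 \<le> c k" and c_antimono: "\<And>k. c (Suc k) \<le> c k" and c_sums: "c sums 1"
    unfolding c_def using h
    by (auto intro: cell_integral_nonneg[OF Phi_nonneg Phi_intg]
        cell_integral_Suc_le[OF Phi_mono Phi_intg] sums_cell_integral[OF Phi_nonneg Phi_int])
  have "bdd_below (range y0)" using y0_ge1 by (intro bdd_belowI2) auto
  then have y0_bounds: "m \<le> y0 i" "y0 i \<le> M" for i
    unfolding m_def M_def using y0_bdd by (auto intro: cINF_lower cSUP_upper)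
  have m_ge1: "1 \<le> m" unfolding m_def using y0_ge1 by (intro cINF_greatest) auto
  have lam_nonneg: "0 \<le> dt / dz" using dt_pos dz_pos by simp
  have "m \<le> y n i \<and> y n i \<le> M" for n i
  proof (induction n arbitrary: i)
    case 0
    show ?case using y0_bounds by (simp add: y_init)
  next
    case (Suc n)
    have y_bounds: "m \<le> y n j" "y n j \<le> M" for j using Suc.IH by auto
    have y_nonneg: "0 \<le> y n j" for j using y_bounds(1)[of j] m_ge1 by linarith
    have w_sums: "(\<lambda>k. c k * y n (i + int k)) sums w n i" for i
      unfolding c_def w_def
      by (rule sums_Phi_ij_convolution[OF Phi_nonneg Phi_int alpha_pos dz_pos y_nonneg y_bounds(2)])
    show ?case
      unfolding y_step
      using kernel_upwind_step_bounds[OF c_nonneg c_antimono c_sums y_bounds m_ge1 w_sums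
          Wflux_mono[OF V_mono] Wflux_diff_le[OF V_deriv V'_cont] lam_nonneg CFL]
      by blast
  qed
  then show ?thesis unfolding m_def M_def by blast
qed

end
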